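(* Let $k$ be a constant and let $D$ be the derivation (linear, satisfying the Leibniz rule, killing constants) on polynomials in the commuting variables $I,x,y$ determined by $D(I)=I(x+y)$, $D(x)=2kxy$, $D(y)=2kxy$. Then for $n\ge1$, $$D^n(I)=I\sum_{w\in B_n}x^{\mathrm{wexc}(w)}y^{\mathrm{aexc}(w)}k^{n-\mathrm{cyc}(w)}.$$
   Context: $B_n$ is the hyperoctahedral group of signed permutations $w$ of $\pm[n]$ with $w(-i)=-w(i)$, written in standard cycle decomposition (each cycle starts with its element of largest absolute value, cycles ordered by increasing absolute value of first elements); $\mathrm{cyc}(w)$ is the number of cycles. An index $i\in[n]$ is a weak excedance if $w(i)=i$ or $w(|w(i)|)>w(i)$, and an anti-excedance if $w(i)=-i$ or $w(|w(i)|)<w(i)$; $\mathrm{wexc}(w)$, $\mathrm{aexc}(w)$ denote their numbers. *)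

theory Defs
  imports "HOL-Computational_Algebra.Polynomial" "HOL-Combinatorics.Permutations"
begin

text \<open>Polynomials in the commuting variables I, x, y over a commutative ring 'a
  (which contains the constant k): nested univariate polynomials,
  outermost variable I, then x, then y.\<close>

definition varI :: "'a::comm_ring_1 poly poly poly" where
  "varI = monom 1 1"

definition varX :: "'a::comm_ring_1 poly poly poly" where
  "varX = [:monom 1 1:]"

definition varY :: "'a::comm_ring_1 poly poly poly" where
  "varY = [:[:monom 1 1:]:]"

definition cst :: "'a::comm_ring_1 \<Rightarrow> 'a poly poly poly" where
  "cst c = [:[:[:c:]:]:]"

definition signed_perms :: "nat \<Rightarrow> (int \<Rightarrow> int) set" where
  "signed_perms n = {w. w permutes ({- int n..int n} - {0}) \<and> (\<forall>i. w (- i) = - w i)}"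

definition wexc :: "nat \<Rightarrow> (int \<Rightarrow> int) \<Rightarrow> nat" where
  "wexc n w = card {i \<in> {1..int n}. w i = i \<or> w \<bar>w i\<bar> > w i}"

definition aexc :: "nat \<Rightarrow> (int \<Rightarrow> int) \<Rightarrow> nat" where
  "aexc n w = card {i \<in> {1..int n}. w i = - i \<or> w \<bar>w i\<bar> < w i}"

text \<open>Number of cycles in the standard cycle decomposition: the cycles are the
  orbits on [n] of the underlying permutation \<open>i \<mapsto> |w(i)|\<close>.\<close>

definition cyc :: "nat \<Rightarrow> (int \<Rightarrow> int) \<Rightarrow> nat" where
  "cyc n w = card ((\<lambda>i. {((\<lambda>j. \<bar>w j\<bar>) ^^ m) i | m. True}) ` {1..int n})"

end

theory Submission
  imports Defs
begin

(* Write N = n + 1. Every w' in B_N arises from exactly one w in B_n, one position i in [N] and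
   one sign e, by setting w'(i) = eN and w'(N) = w(i). For i = N this creates the cycle (N) and one
   new weak excedance (e = 1) or anti-excedance (e = -1), and the power of k is unchanged. For
   i <= n it splices N into the cycle of |w| right after i: the number of cycles stays the same,
   so the power of k rises by one, and if j is the predecessor of i then
   wexc w' = wexc w + 1 - [j is a weak excedance of w] for either sign. Hence the insertions turn
   the weight F = x^a y^b k^(n - cyc w) of w into (x + y + 2k(a y + b x)) F = (x + y) F + D F,
   which is exactly the contribution of w to D(I F) = I ((x + y) F + D F); induction on n
   gives the formula. *)

lemma sum_change_on_subset:
  fixes g g' :: "'a \<Rightarrow> 'b::comm_monoid_add"
  assumes "finite A" "S \<subseteq> A" "\<And>t. t \<in> A - S \<Longrightarrow> g' t = g t"
  shows "sum g' A + sum g S = sum g A + sum g' S"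
proof -
  have "sum g' (A - S) = sum g (A - S)" using assms(3) by (rule sum.cong[OF refl])
  then show ?thesis
    using sum.subset_diff[OF assms(2,1), of g] sum.subset_diff[OF assms(2,1), of g']
    by (simp add: ac_simps)
qed

section \<open>Derivations\<close>

locale derivation =
  fixes D :: "'b::comm_ring_1 \<Rightarrow> 'b"
  assumes add: "D (f + g) = D f + D g"
    and leibniz: "D (f * g) = D f * g + f * D g"
begin

lemma zero: "D 0 = 0"
  using add[of 0 0] by simp

lemma sum: "D (\<Sum>x\<in>A. g x) = (\<Sum>x\<in>A. D (g x))"
  by (induction A rule: infinite_finite_induct) (simp_all add: zero add)

lemma power: "D (f ^ m) = of_nat m * f ^ (m - 1) * D f"
proof (induction m)
  case 0
  have "D 1 = D 1 + D 1" using leibniz[of 1 1] by simp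
  then show ?case by simp
next
  case (Suc m)
  then show ?case by (cases m) (simp_all add: leibniz algebra_simps)
qed

lemma monomial:
  assumes Dx: "D x = 2 * c * x * y" and Dy: "D y = 2 * c * x * y" and Dc: "D c = 0"
  shows "D (x ^ a * y ^ b * c ^ m) =
    2 * c * (of_nat a * y + of_nat b * x) * (x ^ a * y ^ b * c ^ m)"
proof -
  have "D (x ^ a) = of_nat a * x ^ (a - 1) * (2 * c * x * y)" by (simp only: power Dx)
  then have Dxa: "D (x ^ a) = 2 * c * of_nat a * y * x ^ a"
    by (cases a) (simp_all add: algebra_simps)
  have "D (y ^ b) = of_nat b * y ^ (b - 1) * (2 * c * x * y)" by (simp only: power Dy)
  then have Dyb: "D (y ^ b) = 2 * c * of_nat b * x * y ^ b"
    by (cases b) (simp_all add: algebra_simps)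
  have Dcm: "D (c ^ m) = 0" by (simp add: power Dc)
  show ?thesis by (simp add: leibniz Dcm Dxa Dyb algebra_simps)
qed

end

section \<open>Forward orbits\<close>

definition forward_orbit :: "('a \<Rightarrow> 'a) \<Rightarrow> 'a \<Rightarrow> 'a set" where
  "forward_orbit f x = {(f ^^ m) x | m. True}"

lemma forward_orbit_self: "x \<in> forward_orbit f x"
  unfolding forward_orbit_def by (auto intro: exI[of _ 0])

lemma forward_orbit_step: "y \<in> forward_orbit f x \<Longrightarrow> f y \<in> forward_orbit f x"
  unfolding forward_orbit_def by (auto intro: exI[of _ "Suc _"])

lemma forward_orbit_least:
  assumes "x \<in> Y" "f ` Y \<subseteq> Y"
  shows "forward_orbit f x \<subseteq> Y"
proof -
  have "(f ^^ m) x \<in> Y" for m by (induction m) (use assms in auto)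
  then show ?thesis unfolding forward_orbit_def by auto
qed

lemma forward_orbit_mono: "y \<in> forward_orbit f x \<Longrightarrow> forward_orbit f y \<subseteq> forward_orbit f x"
  by (rule forward_orbit_least) (auto intro: forward_orbit_step)

lemma funpow_cong_on_invariant:
  assumes "x \<in> X" "f ` X \<subseteq> X" "\<And>y. y \<in> X \<Longrightarrow> g y = f y"
  shows "(g ^^ m) x = (f ^^ m) x"
proof -
  have "(g ^^ m) x = (f ^^ m) x \<and> (f ^^ m) x \<in> X" by (induction m) (use assms in auto)
  then show ?thesis ..
qed

lemma forward_orbit_cong:
  assumes "x \<in> X" "f ` X \<subseteq> X" "\<And>y. y \<in> X \<Longrightarrow> g y = f y"
  shows "forward_orbit g x = forward_orbit f x"
  unfolding forward_orbit_def using funpow_cong_on_invariant[OF assms] by auto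

lemma bij_betw_in_forward_orbit_image:
  assumes X: "finite X" and f: "bij_betw f X X" and x: "x \<in> X"
  shows "x \<in> forward_orbit f (f x)"
proof -
  define h where "h y = (if y \<in> X then f y else y)" for y
  have "bij_betw h X X" using f by (rule bij_betw_cong[THEN iffD1, rotated]) (simp add: h_def)
  then have "h permutes X" by (rule bij_imp_permutes) (simp add: h_def)
  then have "permutation h" using X by (rule permutes_imp_permutation[rotated])
  then obtain m where m: "m > 0" "(h ^^ m) x = x" by (rule permutation_self)
  have "(h ^^ m) x = (f ^^ m) x"
    using x bij_betw_imp_surj_on[OF f] by (intro funpow_cong_on_invariant) (auto simp: h_def)
  then have "x = (f ^^ (m - 1)) (f x)"
    using m by (metis Suc_diff_1 funpow_Suc_right o_apply)
  then show ?thesis unfolding forward_orbit_def by blast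
qed

lemma forward_orbit_splice:
  assumes x: "x \<in> X" and i: "i \<in> X" and N: "N \<notin> X" and fX: "f ` X \<subseteq> X"
    and g: "\<And>y. y \<in> X \<Longrightarrow> y \<noteq> i \<Longrightarrow> g y = f y" and gi: "g i = N" and gN: "g N = f i"
  shows "forward_orbit g x = forward_orbit f x \<union> (if i \<in> forward_orbit f x then {N} else {})"
    (is "_ = ?O")
proof
  have orbit_X: "forward_orbit f x \<subseteq> X" using x fX by (rule forward_orbit_least)
  have "g y \<in> ?O" if y: "y \<in> ?O" for y
  proof (cases "y \<in> forward_orbit f x")
    case True
    then show ?thesis using g gi orbit_X forward_orbit_step[OF True] by (cases "y = i") auto
  next
    case False
    then have "y = N" "i \<in> forward_orbit f x" using y by (auto split: if_splits)
    then show ?thesis using gN forward_orbit_step[of i f x] by simp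
  qed
  then have "g ` ?O \<subseteq> ?O" by blast
  then show "forward_orbit g x \<subseteq> ?O"
    by (intro forward_orbit_least) (auto intro: forward_orbit_self)
next
  have "f ` (forward_orbit g x \<inter> X) \<subseteq> forward_orbit g x \<inter> X"
  proof (rule image_subsetI)
    fix y assume "y \<in> forward_orbit g x \<inter> X"
    then have y: "y \<in> forward_orbit g x" "y \<in> X" by auto
    show "f y \<in> forward_orbit g x \<inter> X"
    proof (cases "y = i")
      case True
      then show ?thesis
        using forward_orbit_step[OF forward_orbit_step[OF y(1)]] gi gN fX i by auto
    next
      case False
      then show ?thesis using y g fX forward_orbit_step[OF y(1)] by auto
    qed
  qed
  then have sub: "forward_orbit f x \<subseteq> forward_orbit g x \<inter> X"
    using x by (intro forward_orbit_least) (auto intro: forward_orbit_self)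
  moreover have "i \<in> forward_orbit f x \<Longrightarrow> N \<in> forward_orbit g x"
    using sub forward_orbit_step[of i g x] gi by auto
  ultimately show "?O \<subseteq> forward_orbit g x" by auto
qed

abbreviation signed_range :: "nat \<Rightarrow> int set" where
  "signed_range n \<equiv> {- int n..int n} - {0}"

lemma signed_perms_odd: "w \<in> signed_perms n \<Longrightarrow> w (- x) = - w x"
  by (simp add: signed_perms_def)

lemma signed_perms_permutes: "w \<in> signed_perms n \<Longrightarrow> w permutes signed_range n"
  by (simp add: signed_perms_def)

lemma signed_perms_fixes: "w \<in> signed_perms n \<Longrightarrow> x \<notin> signed_range n \<Longrightarrow> w x = x"
  using signed_perms_permutes permutes_not_in by fastforce

lemma signed_perms_inj: "w \<in> signed_perms n \<Longrightarrow> w a = w b \<Longrightarrow> a = b"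
  using signed_perms_permutes permutes_inj by (metis injD)

lemma signed_perms_abs_range:
  assumes "w \<in> signed_perms n" "x \<in> {1..int n}"
  shows "\<bar>w x\<bar> \<in> {1..int n}"
  using permutes_in_image[OF signed_perms_permutes[OF assms(1)], of x] assms(2) by auto

lemma signed_perms_abs_inj:
  assumes w: "w \<in> signed_perms n" and "0 < a" "0 < b" "\<bar>w a\<bar> = \<bar>w b\<bar>"
  shows "a = b"
proof -
  have "w a = w b \<or> w a = w (- b)"
    using assms(4) signed_perms_odd[OF w, of b] by (auto simp: abs_if split: if_splits)
  then have "a = b \<or> a = - b" using signed_perms_inj[OF w] by blast
  then show "a = b" using assms(2,3) by auto
qed

lemma bij_betw_abs_signed_perm:
  assumes w: "w \<in> signed_perms n"
  shows "bij_betw (\<lambda>j. \<bar>w j\<bar>) {1..int n} {1..int n}"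
proof -
  have inj: "inj_on (\<lambda>j. \<bar>w j\<bar>) {1..int n}"
    by (rule inj_onI) (use signed_perms_abs_inj[OF w] in auto)
  moreover have "(\<lambda>j. \<bar>w j\<bar>) ` {1..int n} \<subseteq> {1..int n}"
    using signed_perms_abs_range[OF w] by auto
  ultimately show ?thesis
    using endo_inj_surj[of "{1..int n}"] by (simp add: bij_betw_def)
qed

definition is_wexc :: "(int \<Rightarrow> int) \<Rightarrow> int \<Rightarrow> bool" where
  "is_wexc w i \<longleftrightarrow> w i = i \<or> w \<bar>w i\<bar> > w i"

lemma wexc_eq_card: "wexc n w = card {i \<in> {1..int n}. is_wexc w i}"
  by (simp add: wexc_def is_wexc_def)

lemma wexc_eq_sum: "wexc n w = (\<Sum>i\<in>{1..int n}. of_bool (is_wexc w i))"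
  by (simp only: wexc_eq_card sum_of_bool_eq[OF finite_atLeastAtMost_int]) (simp add: Int_def)

lemma aexc_eq_card:
  assumes w: "w \<in> signed_perms n"
  shows "aexc n w = card {i \<in> {1..int n}. \<not> is_wexc w i}"
proof -
  have "w i = - i \<or> w \<bar>w i\<bar> < w i \<longleftrightarrow> \<not> is_wexc w i" if "1 \<le> i" for i
  proof -
    have "w \<bar>w i\<bar> = w i \<longleftrightarrow> \<bar>w i\<bar> = i" by (auto dest: signed_perms_inj[OF w])
    then show ?thesis using that by (auto simp: is_wexc_def abs_if)
  qed
  then show ?thesis unfolding aexc_def by (intro arg_cong[where f = card]) auto
qed

lemma wexc_add_aexc:
  assumes "w \<in> signed_perms n"
  shows "wexc n w + aexc n w = n"
proof -
  let ?A = "{i \<in> {1..int n}. is_wexc w i}" and ?B = "{i \<in> {1..int n}. \<not> is_wexc w i}"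
  have "card ?A + card ?B = card (?A \<union> ?B)"
    by (rule card_Un_disjoint[symmetric]) (auto intro: finite_subset[of _ "{1..int n}"])
  also have "?A \<union> ?B = {1..int n}" by auto
  finally show ?thesis by (simp add: wexc_eq_card aexc_eq_card[OF assms])
qed

section \<open>Inserting the letter n + 1\<close>

definition signed_swap :: "int \<Rightarrow> int \<Rightarrow> int \<Rightarrow> int" where
  "signed_swap i j = Transposition.transpose i j \<circ> Transposition.transpose (- i) (- j)"

definition sign_flip :: "int \<Rightarrow> int \<Rightarrow> int \<Rightarrow> int" where
  "sign_flip e j = (if e = 1 then id else Transposition.transpose j (- j))"

definition insert_max :: "nat \<Rightarrow> (int \<Rightarrow> int) \<Rightarrow> int \<Rightarrow> int \<Rightarrow> int \<Rightarrow> int" where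
  "insert_max n w i e = w \<circ> sign_flip e (int n + 1) \<circ> signed_swap i (int n + 1)"

definition delete_max :: "nat \<Rightarrow> (int \<Rightarrow> int) \<Rightarrow> int \<Rightarrow> int \<Rightarrow> int \<Rightarrow> int" where
  "delete_max n w i e = w \<circ> signed_swap i (int n + 1) \<circ> sign_flip e (int n + 1)"

definition insert_choices :: "nat \<Rightarrow> (int \<times> int) set" where
  "insert_choices n = {1..int n + 1} \<times> {1, -1}"

lemma insert_max_apply:
  assumes w: "w \<in> signed_perms n" and i: "i \<in> {1..int n + 1}" and e: "e \<in> {1, -1}"
  shows "insert_max n w i e x =
    (if x = i then e * (int n + 1) else if x = - i then - (e * (int n + 1))
     else if x = int n + 1 then w i else if x = - (int n + 1) then - w i else w x)"
proof -
  have "w (int n + 1) = int n + 1" "w (- (int n + 1)) = - (int n + 1)"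
    using signed_perms_fixes[OF w] by auto
  then show ?thesis using i e signed_perms_odd[OF w, of i]
    by (auto simp: insert_max_def sign_flip_def signed_swap_def Transposition.transpose_def)
qed

lemma delete_max_apply:
  assumes w: "w \<in> signed_perms (Suc n)" and i: "i \<in> {1..int n + 1}" and e: "e \<in> {1, -1}"
    and wi: "w i = e * (int n + 1)"
  shows "delete_max n w i e x =
    (if x = int n + 1 then int n + 1 else if x = - (int n + 1) then - (int n + 1)
     else if x = i then w (int n + 1) else if x = - i then - w (int n + 1) else w x)"
  using i e wi signed_perms_odd[OF w, of i] signed_perms_odd[OF w, of "int n + 1"]
  by (auto simp: delete_max_def sign_flip_def signed_swap_def Transposition.transpose_def)

lemma signed_swap_permutes:
  "i \<in> signed_range m \<Longrightarrow> j \<in> signed_range m \<Longrightarrow> signed_swap i j permutes signed_range m"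
  unfolding signed_swap_def by (rule permutes_compose; rule permutes_swap_id) auto

lemma sign_flip_permutes: "j \<in> signed_range m \<Longrightarrow> sign_flip e j permutes signed_range m"
  unfolding sign_flip_def by (auto intro!: permutes_swap_id)

lemma insert_max_mem:
  assumes w: "w \<in> signed_perms n" and i: "i \<in> {1..int n + 1}" and e: "e \<in> {1, -1}"
  shows "insert_max n w i e \<in> signed_perms (Suc n)"
proof -
  have "w permutes signed_range (Suc n)"
    by (rule permutes_subset[OF signed_perms_permutes[OF w]]) auto
  then have "insert_max n w i e permutes signed_range (Suc n)"
    unfolding insert_max_def using i
    by (intro permutes_compose[OF signed_swap_permutes permutes_compose[OF sign_flip_permutes]])
      auto
  moreover have "insert_max n w i e (- x) = - insert_max n w i e x" for x
    unfolding insert_max_apply[OF w i e] using signed_perms_odd[OF w] i by auto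
  ultimately show ?thesis by (simp add: signed_perms_def)
qed

lemma delete_max_mem:
  assumes w: "w \<in> signed_perms (Suc n)" and i: "i \<in> {1..int n + 1}" and e: "e \<in> {1, -1}"
    and wi: "w i = e * (int n + 1)"
  shows "delete_max n w i e \<in> signed_perms n"
proof -
  have "delete_max n w i e permutes signed_range (Suc n)"
    unfolding delete_max_def using i
    by (intro permutes_compose[OF sign_flip_permutes permutes_compose[OF signed_swap_permutes
          signed_perms_permutes[OF w]]]) auto
  then have "delete_max n w i e permutes signed_range n"
    by (rule permutes_superset) (auto simp: delete_max_apply[OF w i e wi])
  moreover have "delete_max n w i e (- x) = - delete_max n w i e x" for x
    unfolding delete_max_apply[OF w i e wi] using signed_perms_odd[OF w] i by auto
  ultimately show ?thesis by (simp add: signed_perms_def)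
qed

lemma insert_delete_max:
  assumes w: "w \<in> signed_perms (Suc n)" and i: "i \<in> {1..int n + 1}" and e: "e \<in> {1, -1}"
    and wi: "w i = e * (int n + 1)"
  shows "insert_max n (delete_max n w i e) i e = w"
proof
  fix x
  show "insert_max n (delete_max n w i e) i e x = w x"
    unfolding insert_max_apply[OF delete_max_mem[OF w i e wi] i e] delete_max_apply[OF w i e wi]
    using wi i signed_perms_odd[OF w, of i] signed_perms_odd[OF w, of "int n + 1"] by auto
qed

lemma delete_insert_max:
  assumes w: "w \<in> signed_perms n" and i: "i \<in> {1..int n + 1}" and e: "e \<in> {1, -1}"
  shows "delete_max n (insert_max n w i e) i e = w"
proof
  fix x
  have wi: "insert_max n w i e i = e * (int n + 1)" by (simp add: insert_max_apply[OF w i e])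
  show "delete_max n (insert_max n w i e) i e x = w x"
    unfolding delete_max_apply[OF insert_max_mem[OF w i e] i e wi] insert_max_apply[OF w i e]
    using signed_perms_fixes[OF w, of "int n + 1"] signed_perms_fixes[OF w, of "- (int n + 1)"]
      i signed_perms_odd[OF w, of i] by auto
qed

lemma signed_perm_position_max:
  assumes w: "w \<in> signed_perms (Suc n)"
  obtains i e where "i \<in> {1..int n + 1}" "e \<in> {1, -1}" "w i = e * (int n + 1)"
proof -
  obtain s where s: "w s = int n + 1"
    using permutes_surj[OF signed_perms_permutes[OF w]] by (metis surjD)
  have "s \<in> signed_range (Suc n)"
    using signed_perms_fixes[OF w, of s] s by fastforce
  moreover have "w \<bar>s\<bar> = (if s > 0 then 1 else -1) * (int n + 1)"
    using s signed_perms_odd[OF w, of s] by auto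
  ultimately show ?thesis
    using that[of "\<bar>s\<bar>" 1] that[of "\<bar>s\<bar>" "- 1"] by (auto split: if_splits)
qed

lemma signed_perm_position_max_unique:
  assumes w: "w \<in> signed_perms (Suc n)" and "i \<in> {1..int n + 1}" "i' \<in> {1..int n + 1}"
    and "e \<in> {1, -1}" "e' \<in> {1, -1}"
    and "w i = e * (int n + 1)" "w i' = e' * (int n + 1)"
  shows "i = i' \<and> e = e'"
proof (cases "e = e'")
  case True
  then show ?thesis using assms signed_perms_inj[OF w, of i i'] by simp
next
  case False
  then have "w i = w (- i')" using assms signed_perms_odd[OF w, of i'] by auto
  then have "i = - i'" by (rule signed_perms_inj[OF w])
  then show ?thesis using assms by simp
qed

lemma bij_betw_insert_max:
  "bij_betw (\<lambda>(w, i, e). insert_max n w i e)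
     (signed_perms n \<times> insert_choices n) (signed_perms (Suc n))"
proof (rule bij_betwI')
  fix a b assume "a \<in> signed_perms n \<times> insert_choices n" "b \<in> signed_perms n \<times> insert_choices n"
  then obtain w i e w' i' e' where ab: "a = (w, i, e)" "b = (w', i', e')"
    and w: "w \<in> signed_perms n" "i \<in> {1..int n + 1}" "e \<in> {1, -1}"
    and w': "w' \<in> signed_perms n" "i' \<in> {1..int n + 1}" "e' \<in> {1, -1}"
    by (auto simp: insert_choices_def)
  show "((\<lambda>(w, i, e). insert_max n w i e) a = (\<lambda>(w, i, e). insert_max n w i e) b) = (a = b)"
  proof
    assume "(\<lambda>(w, i, e). insert_max n w i e) a = (\<lambda>(w, i, e). insert_max n w i e) b"
    then have eq: "insert_max n w i e = insert_max n w' i' e'" using ab by simp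
    have "insert_max n w i e i = e * (int n + 1)" "insert_max n w' i' e' i' = e' * (int n + 1)"
      by (simp_all add: insert_max_apply[OF w] insert_max_apply[OF w'])
    then have "i = i' \<and> e = e'"
      using signed_perm_position_max_unique[OF insert_max_mem[OF w] w(2) w'(2) w(3) w'(3)] eq
      by simp
    moreover from this have "w = w'"
      using delete_insert_max[OF w] delete_insert_max[OF w'] eq by metis
    ultimately show "a = b" using ab by simp
  qed simp
next
  fix a assume "a \<in> signed_perms n \<times> insert_choices n"
  then show "(\<lambda>(w, i, e). insert_max n w i e) a \<in> signed_perms (Suc n)"
    by (auto simp: insert_choices_def intro: insert_max_mem)
next
  fix w assume w: "w \<in> signed_perms (Suc n)"
  then obtain i e where ie: "i \<in> {1..int n + 1}" "e \<in> {1, -1}" "w i = e * (int n + 1)"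
    by (rule signed_perm_position_max)
  show "\<exists>a\<in>signed_perms n \<times> insert_choices n. w = (\<lambda>(w, i, e). insert_max n w i e) a"
    by (rule bexI[of _ "(delete_max n w i e, i, e)"])
       (use insert_delete_max[OF w ie] delete_max_mem[OF w ie] ie
         in \<open>auto simp: insert_choices_def\<close>)
qed

section \<open>Statistics of an insertion\<close>

lemma Icc_int_Suc: "{1..int (Suc n)} = insert (int n + 1) {1..int n}"
  by auto

lemma cyc_eq_card_forward_orbits: "cyc n w = card (forward_orbit (\<lambda>j. \<bar>w j\<bar>) ` {1..int n})"
  by (simp add: cyc_def forward_orbit_def)

lemma cyc_le: "cyc n w \<le> n"
  unfolding cyc_def using card_image_le[of "{1..int n}"] by fastforce

lemma cyc_insert_max_fixed:
  assumes w: "w \<in> signed_perms n" and e: "e \<in> {1, -1}"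
  shows "cyc (Suc n) (insert_max n w (int n + 1) e) = Suc (cyc n w)"
proof -
  define f where "f = (\<lambda>j. \<bar>w j\<bar>)"
  define f' where "f' = (\<lambda>j. \<bar>insert_max n w (int n + 1) e j\<bar>)"
  note apply_max = insert_max_apply[OF w _ e, of "int n + 1"]
  have fX: "f ` {1..int n} \<subseteq> {1..int n}"
    using signed_perms_abs_range[OF w] by (auto simp: f_def)
  have old_orbits: "forward_orbit f' ` {1..int n} = forward_orbit f ` {1..int n}"
    by (intro image_cong refl forward_orbit_cong[OF _ fX]) (auto simp: f_def f'_def apply_max)
  have "f' (int n + 1) = int n + 1" using e by (auto simp: f'_def apply_max)
  then have new_orbit: "forward_orbit f' (int n + 1) = {int n + 1}"
    using forward_orbit_least[of "int n + 1" "{int n + 1}" f'] forward_orbit_self[of _ f'] by auto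
  have "{int n + 1} \<notin> forward_orbit f ` {1..int n}"
    using forward_orbit_least[OF _ fX] by force
  then show ?thesis
    unfolding cyc_eq_card_forward_orbits Icc_int_Suc image_insert
    by (simp add: f_def[symmetric] f'_def[symmetric] old_orbits new_orbit)
qed

lemma cyc_insert_max_cycle:
  assumes w: "w \<in> signed_perms n" and e: "e \<in> {1, -1}" and i: "i \<in> {1..int n}"
  shows "cyc (Suc n) (insert_max n w i e) = cyc n w"
proof -
  define N where "N = int n + 1"
  define f where "f = (\<lambda>j. \<bar>w j\<bar>)"
  define f' where "f' = (\<lambda>j. \<bar>insert_max n w i e j\<bar>)"
  define splice where "splice S = S \<union> (if i \<in> S then {N} else {})" for S
  note apply_i = insert_max_apply[OF w _ e, of i]
  have fX: "f ` {1..int n} \<subseteq> {1..int n}"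
    using signed_perms_abs_range[OF w] by (auto simp: f_def)
  have fi: "f' i = N" using e i by (auto simp: f'_def N_def apply_i)
  have fN: "f' N = f i" using i by (auto simp: f'_def f_def N_def apply_i)
  have orbit_spliced: "forward_orbit f' l = splice (forward_orbit f l)" if "l \<in> {1..int n}" for l
    unfolding splice_def
    by (rule forward_orbit_splice[OF that i _ fX _ fi fN])
      (use i in \<open>auto simp: N_def f_def f'_def apply_i\<close>)
  have "forward_orbit f' N = forward_orbit f' i"
  proof
    have "N \<in> forward_orbit f' i"
      using forward_orbit_step[OF forward_orbit_self[of i f']] fi by simp
    then show "forward_orbit f' N \<subseteq> forward_orbit f' i" by (rule forward_orbit_mono)
  next
    have "i \<in> forward_orbit f (f i)"
      using bij_betw_in_forward_orbit_image[OF _ bij_betw_abs_signed_perm[OF w] i]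
      by (simp add: f_def)
    moreover have "f i \<in> {1..int n}" using fX i by blast
    ultimately have i_in: "i \<in> forward_orbit f' (f i)"
      using orbit_spliced by (auto simp: splice_def)
    have "f i \<in> forward_orbit f' N"
      using forward_orbit_step[OF forward_orbit_self[of N f']] fN by simp
    then have "forward_orbit f' (f i) \<subseteq> forward_orbit f' N" by (rule forward_orbit_mono)
    with i_in have "i \<in> forward_orbit f' N" by blast
    then show "forward_orbit f' i \<subseteq> forward_orbit f' N" by (rule forward_orbit_mono)
  qed
  then have "forward_orbit f' ` {1..int (Suc n)} =
      insert (forward_orbit f' i) (forward_orbit f' ` {1..int n})"
    unfolding Icc_int_Suc image_insert by (simp add: N_def)
  also have "\<dots> = forward_orbit f' ` {1..int n}" using i by blast
  also have "\<dots> = splice ` forward_orbit f ` {1..int n}"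
    unfolding image_image by (rule image_cong) (auto simp: orbit_spliced)
  finally have orbits:
    "forward_orbit f' ` {1..int (Suc n)} = splice ` forward_orbit f ` {1..int n}" .
  have "inj_on splice (forward_orbit f ` {1..int n})"
  proof (rule inj_onI)
    fix A B assume A: "A \<in> forward_orbit f ` {1..int n}" and B: "B \<in> forward_orbit f ` {1..int n}"
      and eq: "splice A = splice B"
    have "N \<notin> A" "N \<notin> B"
      using A B forward_orbit_least[OF _ fX] by (force simp: N_def)+
    then have "A = splice A - {N}" "B = splice B - {N}" by (auto simp: splice_def)
    with eq show "A = B" by simp
  qed
  then show ?thesis
    unfolding cyc_eq_card_forward_orbits f'_def[symmetric] f_def[symmetric] orbits
    by (rule card_image)
qed

lemma wexc_insert_max_fixed:
  assumes w: "w \<in> signed_perms n" and e: "e \<in> {1, -1}"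
  shows "wexc (Suc n) (insert_max n w (int n + 1) e) = wexc n w + of_bool (e = 1)"
proof -
  let ?W = "insert_max n w (int n + 1) e"
  note apply_max = insert_max_apply[OF w _ e, of "int n + 1"]
  have "is_wexc ?W t = is_wexc w t" if "t \<in> {1..int n}" for t
    using signed_perms_abs_range[OF w that] that by (simp add: is_wexc_def apply_max)
  then have "(\<Sum>t\<in>{1..int n}. of_bool (is_wexc ?W t)) = (\<Sum>t\<in>{1..int n}. of_bool (is_wexc w t))"
    by (intro sum.cong) auto
  moreover have "is_wexc ?W (int n + 1) \<longleftrightarrow> e = 1"
    using e by (auto simp: is_wexc_def apply_max)
  ultimately show ?thesis
    unfolding wexc_eq_sum Icc_int_Suc by (simp del: sum_of_bool_eq)
qed

lemma wexc_insert_max_cycle: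
  assumes w: "w \<in> signed_perms n" and e: "e \<in> {1, -1}" and j: "j \<in> {1..int n}"
  shows "wexc (Suc n) (insert_max n w \<bar>w j\<bar> e) + of_bool (is_wexc w j) = wexc n w + 1"
proof -
  define i where "i = \<bar>w j\<bar>"
  define W where "W = insert_max n w i e"
  have i: "i \<in> {1..int n}" using signed_perms_abs_range[OF w j] by (simp add: i_def)
  note apply_i = insert_max_apply[OF w _ e, of i, folded W_def]
  have wi: "\<bar>w i\<bar> \<in> {1..int n}" using signed_perms_abs_range[OF w i] .
  have unchanged: "is_wexc W t = is_wexc w t" if "t \<in> {1..int n} - {i, j}" for t
  proof -
    have "\<bar>w t\<bar> \<noteq> i" using signed_perms_abs_inj[OF w, of t j] that j by (auto simp: i_def)
    then show ?thesis
      using that signed_perms_abs_range[OF w, of t] i by (simp add: is_wexc_def apply_i)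
  qed
  have at_i: "is_wexc W i \<longleftrightarrow> e = -1" using e i wi by (auto simp: is_wexc_def apply_i)
  have at_max: "is_wexc W (int n + 1) \<longleftrightarrow> (if j = i then e = 1 else is_wexc w i)"
  proof (cases "j = i")
    case True
    then have "\<bar>w i\<bar> = i" by (simp add: i_def)
    then show ?thesis using True e i by (auto simp: is_wexc_def apply_i abs_if split: if_splits)
  next
    case False
    then have "\<bar>w i\<bar> \<noteq> \<bar>w j\<bar>" using signed_perms_abs_inj[OF w, of i j] i j by auto
    then have "\<bar>w i\<bar> \<noteq> i" by (simp add: i_def)
    then show ?thesis using False i wi by (auto simp: is_wexc_def apply_i)
  qed
  have at_j: "is_wexc W j \<longleftrightarrow> e = 1" if "j \<noteq> i"
  proof -
    have "\<bar>w j\<bar> = i" "w j \<noteq> j" using that j by (auto simp: i_def)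
    then show ?thesis using that e i j by (auto simp: is_wexc_def apply_i)
  qed
  have change: "(\<Sum>t\<in>{1..int n}. of_bool (is_wexc W t)) + (\<Sum>t\<in>{i, j}. of_bool (is_wexc w t))
      = wexc n w + (\<Sum>t\<in>{i, j}. of_bool (is_wexc W t))"
    unfolding wexc_eq_sum by (rule sum_change_on_subset) (use i j unchanged in auto)
  have "wexc (Suc n) W = of_bool (is_wexc W (int n + 1)) + (\<Sum>t\<in>{1..int n}. of_bool (is_wexc W t))"
    unfolding wexc_eq_sum Icc_int_Suc by (simp del: sum_of_bool_eq)
  then have "wexc (Suc n) W + of_bool (is_wexc w j) = wexc n w + 1"
    using change at_i at_j at_max e by (cases "j = i") (auto simp del: sum_of_bool_eq)
  then show ?thesis by (simp add: W_def i_def)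
qed

definition signed_perm_weight :: "'a::comm_ring_1 \<Rightarrow> nat \<Rightarrow> (int \<Rightarrow> int) \<Rightarrow> 'a poly poly poly" where
  "signed_perm_weight k n w = varX ^ wexc n w * varY ^ aexc n w * cst k ^ (n - cyc n w)"

lemma signed_perm_weight_insert_max_fixed:
  assumes w: "w \<in> signed_perms n" and e: "e \<in> {1, -1}"
  shows "signed_perm_weight k (Suc n) (insert_max n w (int n + 1) e) =
    (if e = 1 then varX else varY) * signed_perm_weight k n w"
proof -
  define W where "W = insert_max n w (int n + 1) e"
  have wexc: "wexc (Suc n) W = wexc n w + of_bool (e = 1)"
    unfolding W_def by (rule wexc_insert_max_fixed[OF w e])
  moreover have "wexc (Suc n) W + aexc (Suc n) W = Suc n"
    using insert_max_mem[OF w _ e] unfolding W_def by (intro wexc_add_aexc) simp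
  ultimately have aexc: "aexc (Suc n) W = aexc n w + of_bool (e \<noteq> 1)"
    using wexc_add_aexc[OF w] by (cases "e = 1") simp_all
  have "Suc n - cyc (Suc n) W = n - cyc n w"
    using cyc_insert_max_fixed[OF w e] by (simp add: W_def)
  then show ?thesis
    unfolding W_def[symmetric]
    by (cases "e = 1") (simp_all add: signed_perm_weight_def wexc aexc algebra_simps)
qed

lemma signed_perm_weight_insert_max_cycle:
  assumes w: "w \<in> signed_perms n" and e: "e \<in> {1, -1}" and j: "j \<in> {1..int n}"
  shows "signed_perm_weight k (Suc n) (insert_max n w \<bar>w j\<bar> e) =
    cst k * (if is_wexc w j then varY else varX) * signed_perm_weight k n w"
proof -
  define W where "W = insert_max n w \<bar>w j\<bar> e"
  have i: "\<bar>w j\<bar> \<in> {1..int n}" by (rule signed_perms_abs_range[OF w j])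
  have "wexc (Suc n) W + of_bool (is_wexc w j) = wexc n w + 1"
    unfolding W_def by (rule wexc_insert_max_cycle[OF w e j])
  then have wexc: "wexc (Suc n) W = wexc n w + of_bool (\<not> is_wexc w j)"
    by (cases "is_wexc w j") simp_all
  moreover have "wexc (Suc n) W + aexc (Suc n) W = Suc n"
    using insert_max_mem[OF w _ e] i unfolding W_def by (intro wexc_add_aexc) simp
  ultimately have aexc: "aexc (Suc n) W = aexc n w + of_bool (is_wexc w j)"
    using wexc_add_aexc[OF w] by (cases "is_wexc w j") simp_all
  have "Suc n - cyc (Suc n) W = Suc (n - cyc n w)"
    using cyc_insert_max_cycle[OF w e i] cyc_le[of n w] by (simp add: W_def)
  then show ?thesis
    unfolding W_def[symmetric]
    by (cases "is_wexc w j") (simp_all add: signed_perm_weight_def wexc aexc algebra_simps)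
qed

lemma sum_signed_perm_weight_insert_max:
  assumes w: "w \<in> signed_perms n"
  shows "(\<Sum>(i, e)\<in>insert_choices n. signed_perm_weight k (Suc n) (insert_max n w i e)) =
    (varX + varY + 2 * cst k * (of_nat (wexc n w) * varY + of_nat (aexc n w) * varX))
      * signed_perm_weight k n w"
proof -
  let ?F = "signed_perm_weight k n w"
  let ?G = "\<lambda>i e. signed_perm_weight k (Suc n) (insert_max n w i e)"
  have "(\<Sum>(i, e)\<in>insert_choices n. ?G i e) = (\<Sum>i\<in>insert (int n + 1) {1..int n}. \<Sum>e\<in>{1, -1}. ?G i e)"
    unfolding insert_choices_def sum.cartesian_product[symmetric]
    by (intro sum.cong) auto
  also have "\<dots> = (\<Sum>e\<in>{1, -1}. ?G (int n + 1) e) + (\<Sum>i\<in>{1..int n}. \<Sum>e\<in>{1, -1}. ?G i e)"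
    by simp
  also have "(\<Sum>e\<in>{1, -1}. ?G (int n + 1) e) = (varX + varY) * ?F"
    by (simp add: signed_perm_weight_insert_max_fixed[OF w]) (simp add: algebra_simps)
  also have "(\<Sum>i\<in>{1..int n}. \<Sum>e\<in>{1, -1}. ?G i e) = (\<Sum>j\<in>{1..int n}. \<Sum>e\<in>{1, -1}. ?G \<bar>w j\<bar> e)"
    by (rule sum.reindex_bij_betw[OF bij_betw_abs_signed_perm[OF w], symmetric])
  also have "\<dots> = (\<Sum>j\<in>{1..int n}.
      if is_wexc w j then 2 * cst k * varY * ?F else 2 * cst k * varX * ?F)"
    by (intro sum.cong refl) (simp add: signed_perm_weight_insert_max_cycle[OF w] algebra_simps)
  also have "\<dots> = 2 * cst k * (of_nat (wexc n w) * varY + of_nat (aexc n w) * varX) * ?F"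
    by (simp add: sum.If_cases wexc_eq_card aexc_eq_card[OF w] Int_def algebra_simps)
  finally show ?thesis by (simp add: algebra_simps)
qed

lemma signed_perms_0: "signed_perms 0 = {id}"
  by (auto simp: signed_perms_def)

lemma higher_derivative_varI:
  fixes k :: "'a::comm_ring_1"
  assumes "derivation D"
    and const: "\<And>c. D (cst c) = 0"
    and DI: "D varI = varI * (varX + varY)"
    and Dx: "D varX = 2 * cst k * varX * varY"
    and Dy: "D varY = 2 * cst k * varX * varY"
  shows "(D ^^ n) varI = varI * (\<Sum>w\<in>signed_perms n. signed_perm_weight k n w)"
proof (induction n)
  case 0
  then show ?case by (simp add: signed_perms_0 signed_perm_weight_def wexc_def aexc_def cyc_def)
next
  case (Suc n)
  interpret derivation D by fact
  have D_weight: "D (signed_perm_weight k n w) = 2 * cst k *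
      (of_nat (wexc n w) * varY + of_nat (aexc n w) * varX) * signed_perm_weight k n w" for w
    unfolding signed_perm_weight_def by (rule monomial[OF Dx Dy const])
  have "(D ^^ Suc n) varI = varI * (\<Sum>w\<in>signed_perms n. (varX + varY) * signed_perm_weight k n w
                                      + D (signed_perm_weight k n w))"
    using Suc by (simp add: leibniz DI sum sum.distrib sum_distrib_left algebra_simps)
  also have "\<dots> = varI * (\<Sum>w\<in>signed_perms n. \<Sum>(i, e)\<in>insert_choices n.
                              signed_perm_weight k (Suc n) (insert_max n w i e))"
    by (intro arg_cong[where f = "times varI"] sum.cong refl)
      (simp add: sum_signed_perm_weight_insert_max D_weight algebra_simps)
  also have "\<dots> = varI * (\<Sum>w\<in>signed_perms (Suc n). signed_perm_weight k (Suc n) w)"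
    unfolding sum.cartesian_product
    by (subst sum.reindex_bij_betw[OF bij_betw_insert_max, symmetric]) (simp add: case_prod_unfold)
  finally show ?case .
qed

theorem lemma3:
  fixes k :: "'a::comm_ring_1"
    and D :: "'a poly poly poly \<Rightarrow> 'a poly poly poly"
  assumes add: "\<forall>f g. D (f + g) = D f + D g"
    and leibniz: "\<forall>f g. D (f * g) = D f * g + f * D g"
    and const: "\<forall>c. D (cst c) = 0"
    and DI: "D varI = varI * (varX + varY)"
    and Dx: "D varX = 2 * cst k * varX * varY"
    and Dy: "D varY = 2 * cst k * varX * varY"
  shows "\<forall>n\<ge>1. (D ^^ n) varI =
           varI * (\<Sum>w\<in>signed_perms n.
                     varX ^ wexc n w * varY ^ aexc n w * cst k ^ (n - cyc n w))"
proof -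
  have "derivation D" by unfold_locales (simp_all add: add leibniz)
  from higher_derivative_varI[OF this _ DI Dx Dy] const
  show ?thesis by (simp add: signed_perm_weight_def)
qed

end
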